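(* Let $1<w\le 2$, $1<h\le 2$, $n\ge 2$ and $\frac12\le y_1<\dots<y_n\le h-\frac12$. Every layout of these $n$ squares has gap at most $\frac{w+h-2}{n-1}$.
   Context: The instance is the strip $T=[0,w]\times[0,h]$ with the given $y_i$. A layout is a pair $(\mathbf x,\prec)$ where $\mathbf x=(x_1,\dots,x_n)$ with $x_i\in[\frac12,w-\frac12]$, and $\prec$ is a total order (stacking order) on the squares $s_1,\dots,s_n$, where $s_i$ is the closed axis-parallel unit square with centre $(x_i,y_i)$. If $s_i\prec s_j$ we say $s_j$ is in front of $s_i$ and $s_i$ is behind $s_j$. A point $p$ on the boundary of $s_i$ is visible if every square $s_j$ ($j\neq i$) containing $p$ is behind $s_i$. The visible perimeter of $s_i$ is the total length of its visible boundary points; the gap of $s_i$ is its visible perimeter minus $2$, and the gap of a layout is the minimum of the gaps of its squares. *)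

theory Defs
  imports "HOL-Analysis.Analysis"
begin

text \<open>Squares are indexed by 0..n-1. The stacking order is given by an injective
  rank function rk on {..<n}: s_i is behind s_j iff rk i < rk j.\<close>

definition unit_sq :: "real \<Rightarrow> real \<Rightarrow> (real \<times> real) set" where
  "unit_sq a b = {p. \<bar>fst p - a\<bar> \<le> 1/2 \<and> \<bar>snd p - b\<bar> \<le> 1/2}"

definition is_layout :: "real \<Rightarrow> nat \<Rightarrow> (nat \<Rightarrow> real) \<Rightarrow> (nat \<Rightarrow> nat) \<Rightarrow> bool" where
  "is_layout w n x rk \<longleftrightarrow> (\<forall>i<n. 1/2 \<le> x i \<and> x i \<le> w - 1/2) \<and> inj_on rk {..<n}"

definition visible_pt ::
  "nat \<Rightarrow> (nat \<Rightarrow> real) \<Rightarrow> (nat \<Rightarrow> real) \<Rightarrow> (nat \<Rightarrow> nat) \<Rightarrow> nat \<Rightarrow> real \<times> real \<Rightarrow> bool" where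
  "visible_pt n x y rk i p \<longleftrightarrow>
     p \<in> frontier (unit_sq (x i) (y i)) \<and>
     (\<forall>j<n. j \<noteq> i \<and> p \<in> unit_sq (x j) (y j) \<longrightarrow> rk j < rk i)"

definition sq_edge :: "real \<Rightarrow> real \<Rightarrow> nat \<Rightarrow> real \<Rightarrow> real \<times> real" where
  "sq_edge a b k t =
     (if k = 0 then (a - 1/2 + t, b - 1/2)
      else if k = 1 then (a + 1/2, b - 1/2 + t)
      else if k = 2 then (a - 1/2 + t, b + 1/2)
      else (a - 1/2, b - 1/2 + t))"

definition visible_perimeter ::
  "nat \<Rightarrow> (nat \<Rightarrow> real) \<Rightarrow> (nat \<Rightarrow> real) \<Rightarrow> (nat \<Rightarrow> nat) \<Rightarrow> nat \<Rightarrow> real" where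
  "visible_perimeter n x y rk i =
     (\<Sum>k<4. measure lebesgue {t \<in> {0..1}. visible_pt n x y rk i (sq_edge (x i) (y i) k t)})"

definition sq_gap :: "nat \<Rightarrow> (nat \<Rightarrow> real) \<Rightarrow> (nat \<Rightarrow> real) \<Rightarrow> (nat \<Rightarrow> nat) \<Rightarrow> nat \<Rightarrow> real" where
  "sq_gap n x y rk i = visible_perimeter n x y rk i - 2"

definition layout_gap :: "nat \<Rightarrow> (nat \<Rightarrow> real) \<Rightarrow> (nat \<Rightarrow> real) \<Rightarrow> (nat \<Rightarrow> nat) \<Rightarrow> real" where
  "layout_gap n x y rk = Min ((\<lambda>i. sq_gap n x y rk i) ` {..<n})"

end

theory Submission
  imports Defs
begin

(* On a vertical line through abscissa s, the squares meeting the line cut out unit intervals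
   which pairwise intersect because h \<le> 2.  Among k such intervals in any stacking order at
   most k + 1 of their 2k endpoints are visible: the backmost interval has an endpoint inside
   another one, and removing it only uncovers endpoints.  Integrating over s, the horizontal
   edges have total visible length at most n + w; likewise the vertical edges at most n + h.
   So the gaps sum to at most w + h, and since the frontmost square is fully visible (gap 2),
   the other n - 1 gaps sum to at most w + h - 2. *)

definition endpoint_visible ::
  "'a set \<Rightarrow> ('a \<Rightarrow> 'b::linorder) \<Rightarrow> ('a \<Rightarrow> real) \<Rightarrow> 'a \<Rightarrow> real \<Rightarrow> bool" where
  "endpoint_visible S rk c i e \<longleftrightarrow> (\<forall>j\<in>S. j \<noteq> i \<and> \<bar>e - c j\<bar> \<le> 1/2 \<longrightarrow> rk j < rk i)"

lemma endpoint_visible_subset: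
  "endpoint_visible S rk c i e \<Longrightarrow> T \<subseteq> S \<Longrightarrow> endpoint_visible T rk c i e"
  unfolding endpoint_visible_def by blast

lemma backmost_endpoint_hidden:
  assumes "j \<in> S" "j \<noteq> m" "rk m \<le> rk j" "\<bar>c m - c j\<bar> \<le> 1"
  shows "\<not> endpoint_visible S rk c m (c m - 1/2) \<or> \<not> endpoint_visible S rk c m (c m + 1/2)"
proof -
  have "\<bar>c m - 1/2 - c j\<bar> \<le> 1/2 \<or> \<bar>c m + 1/2 - c j\<bar> \<le> 1/2"
    using assms(4) by linarith
  then show ?thesis
    using assms(1-3) unfolding endpoint_visible_def by force
qed

lemma sum_endpoint_visible_le:
  fixes c :: "'a \<Rightarrow> real" and rk :: "'a \<Rightarrow> 'b::linorder"
  assumes "finite S" and "\<forall>i\<in>S. \<forall>j\<in>S. \<bar>c i - c j\<bar> \<le> 1"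
  shows "(\<Sum>i\<in>S. of_bool (endpoint_visible S rk c i (c i - 1/2))
                + of_bool (endpoint_visible S rk c i (c i + 1/2)) :: real) \<le> card S + 1"
  using assms
proof (induction S rule: finite_remove_induct)
  case empty
  then show ?case by simp
next
  case (remove A)
  let ?v = "\<lambda>S i. of_bool (endpoint_visible S rk c i (c i - 1/2))
                + of_bool (endpoint_visible S rk c i (c i + 1/2)) :: real"
  obtain m where m: "m \<in> A" "\<And>j. j \<in> A \<Longrightarrow> rk m \<le> rk j"
    using ex_is_arg_min_if_finite[OF remove.hyps(1,2), of rk] by (auto simp: is_arg_min_linorder)
  show ?case
  proof (cases "A = {m}")
    case False
    then obtain j where "j \<in> A" "j \<noteq> m" using m(1) by blast
    then have "?v A m \<le> 1"
      using backmost_endpoint_hidden[of j A m rk c] m remove.prems by auto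
    moreover have "(\<Sum>i\<in>A - {m}. ?v A i) \<le> (\<Sum>i\<in>A - {m}. ?v (A - {m}) i)"
      by (intro sum_mono add_mono) (auto dest: endpoint_visible_subset[of A _ _ _ _ "A - {m}"])
    moreover have "(\<Sum>i\<in>A - {m}. ?v (A - {m}) i) \<le> card (A - {m}) + 1"
      using remove.IH[OF m(1)] remove.prems by blast
    ultimately show ?thesis
      using sum.remove[OF remove.hyps(1) m(1), of "?v A"] card.remove[OF remove.hyps(1) m(1)]
      by simp
  qed simp
qed

(* The visible part of the edge of s_i on the line {c = e}, parametrised by the other
   coordinate: horizontal edges for (u, c) = (x, y), vertical edges for (u, c) = (y, x). *)
definition visible_segment ::
  "nat \<Rightarrow> (nat \<Rightarrow> real) \<Rightarrow> (nat \<Rightarrow> real) \<Rightarrow> (nat \<Rightarrow> nat) \<Rightarrow> nat \<Rightarrow> real \<Rightarrow> real set" where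
  "visible_segment n u c rk i e =
     {s. \<bar>s - u i\<bar> \<le> 1/2 \<and> endpoint_visible {j. j < n \<and> \<bar>s - u j\<bar> \<le> 1/2} rk c i e}"

lemma mem_visible_segment:
  "s \<in> visible_segment n u c rk i e \<longleftrightarrow> \<bar>s - u i\<bar> \<le> 1/2 \<and>
     (\<forall>j<n. j \<noteq> i \<and> \<bar>s - u j\<bar> \<le> 1/2 \<and> \<bar>e - c j\<bar> \<le> 1/2 \<longrightarrow> rk j < rk i)"
  unfolding visible_segment_def endpoint_visible_def by auto

lemma visible_segment_subset: "visible_segment n u c rk i e \<subseteq> {u i - 1/2..u i + 1/2}"
  by (auto simp: mem_visible_segment abs_if split: if_split_asm)

lemma visible_segment_lmeasurable: "visible_segment n u c rk i e \<in> lmeasurable"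
proof (rule bounded_set_imp_lmeasurable)
  show "bounded (visible_segment n u c rk i e)"
    using bounded_subset[OF bounded_closed_interval visible_segment_subset] .
  show "visible_segment n u c rk i e \<in> sets lebesgue"
  proof -
    have "visible_segment n u c rk i e = {s. \<bar>s - u i\<bar> \<le> 1/2 \<and>
        (\<forall>j<n. j \<noteq> i \<and> \<bar>s - u j\<bar> \<le> 1/2 \<and> \<bar>e - c j\<bar> \<le> 1/2 \<longrightarrow> rk j < rk i)}"
      using mem_visible_segment by blast
    also have "\<dots> \<in> sets borel" by measurable
    finally show ?thesis by simp
  qed
qed

lemma visible_segment_front:
  assumes "\<forall>j<n. j \<noteq> i \<longrightarrow> rk j < rk i"
  shows "visible_segment n u c rk i e = {u i - 1/2..u i + 1/2}"
  using assms by (auto simp: mem_visible_segment abs_if split: if_split_asm)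

lemma frontier_unit_sq:
  "(p, q) \<in> frontier (unit_sq a b) \<longleftrightarrow>
     \<bar>p - a\<bar> \<le> 1/2 \<and> \<bar>q - b\<bar> \<le> 1/2 \<and> (\<bar>p - a\<bar> = 1/2 \<or> \<bar>q - b\<bar> = 1/2)"
proof -
  have "unit_sq a b = {a-1/2..a+1/2} \<times> {b-1/2..b+1/2}"
    unfolding unit_sq_def by (auto simp: abs_if split: if_split_asm)
  then have "frontier (unit_sq a b) = unit_sq a b - {a-1/2<..<a+1/2} \<times> {b-1/2<..<b+1/2}"
    by (simp add: frontier_def closure_Times interior_Times)
  then show ?thesis unfolding unit_sq_def by (auto simp: abs_if split: if_split_asm)
qed

lemma visible_pt_horizontal_edge:
  assumes "\<bar>e - y i\<bar> = 1/2"
  shows "visible_pt n x y rk i (s, e) \<longleftrightarrow> s \<in> visible_segment n x y rk i e"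
  using assms unfolding visible_pt_def frontier_unit_sq visible_segment_def endpoint_visible_def
  unfolding unit_sq_def by auto

lemma visible_pt_vertical_edge:
  assumes "\<bar>e - x i\<bar> = 1/2"
  shows "visible_pt n x y rk i (e, s) \<longleftrightarrow> s \<in> visible_segment n y x rk i e"
  using assms unfolding visible_pt_def frontier_unit_sq visible_segment_def endpoint_visible_def
  unfolding unit_sq_def by auto

lemma measure_reparam_unit_interval:
  fixes A :: "real set"
  assumes "A \<subseteq> {a - 1/2..a + 1/2}"
  shows "measure lebesgue {t \<in> {0..1}. a - 1/2 + t \<in> A} = measure lebesgue A"
proof -
  have "A = (+) (a - 1/2) ` {t \<in> {0..1}. a - 1/2 + t \<in> A}"
  proof
    show "A \<subseteq> (+) (a - 1/2) ` {t \<in> {0..1}. a - 1/2 + t \<in> A}"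
    proof
      fix s assume "s \<in> A"
      with assms show "s \<in> (+) (a - 1/2) ` {t \<in> {0..1}. a - 1/2 + t \<in> A}"
        by (intro image_eqI[of _ _ "s - (a - 1/2)"]) auto
    qed
  qed auto
  then show ?thesis by (metis measure_translation)
qed

lemma measure_visible_horizontal_edge:
  assumes "\<bar>e - y i\<bar> = 1/2"
  shows "measure lebesgue {t \<in> {0..1}. visible_pt n x y rk i (x i - 1/2 + t, e)}
       = measure lebesgue (visible_segment n x y rk i e)"
  using measure_reparam_unit_interval[OF visible_segment_subset[of n x y rk i e]] assms
  by (simp add: visible_pt_horizontal_edge)

lemma measure_visible_vertical_edge:
  assumes "\<bar>e - x i\<bar> = 1/2"
  shows "measure lebesgue {t \<in> {0..1}. visible_pt n x y rk i (e, y i - 1/2 + t)}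
       = measure lebesgue (visible_segment n y x rk i e)"
  using measure_reparam_unit_interval[OF visible_segment_subset[of n y x rk i e]] assms
  by (simp add: visible_pt_vertical_edge)

lemma visible_perimeter_eq:
  "visible_perimeter n x y rk i =
     measure lebesgue (visible_segment n x y rk i (y i - 1/2))
   + measure lebesgue (visible_segment n y x rk i (x i + 1/2))
   + measure lebesgue (visible_segment n x y rk i (y i + 1/2))
   + measure lebesgue (visible_segment n y x rk i (x i - 1/2))"
proof -
  have "(\<Sum>k<4. f k) = f 0 + f 1 + f 2 + (f 3 :: real)" for f :: "nat \<Rightarrow> real"
    by (simp add: eval_nat_numeral)
  moreover have "sq_edge a b 0 t = (a - 1/2 + t, b - 1/2)" "sq_edge a b 1 t = (a + 1/2, b - 1/2 + t)"
    "sq_edge a b 2 t = (a - 1/2 + t, b + 1/2)" "sq_edge a b 3 t = (a - 1/2, b - 1/2 + t)" for a b t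
    by (simp_all add: sq_edge_def)
  ultimately show ?thesis
    unfolding visible_perimeter_def
    by (simp only: measure_visible_horizontal_edge measure_visible_vertical_edge)
qed

lemma sum_indicator_visible_segments_le:
  fixes u c :: "nat \<Rightarrow> real"
  assumes u: "\<forall>i<n. 1/2 \<le> u i \<and> u i \<le> L - 1/2" and c: "\<forall>i<n. \<forall>j<n. \<bar>c i - c j\<bar> \<le> 1"
  shows "(\<Sum>i<n. indicator (visible_segment n u c rk i (c i - 1/2)) s
                + indicator (visible_segment n u c rk i (c i + 1/2)) s :: real)
         \<le> (\<Sum>i<n. indicator {u i - 1/2..u i + 1/2} s) + indicator {0..L} s"
proof -
  define S where "S = {i \<in> {..<n}. \<bar>s - u i\<bar> \<le> 1/2}"
  let ?v = "\<lambda>i. of_bool (endpoint_visible S rk c i (c i - 1/2))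
              + of_bool (endpoint_visible S rk c i (c i + 1/2)) :: real"
  have "finite S" by (simp add: S_def)
  have "(\<Sum>i<n. indicator (visible_segment n u c rk i (c i - 1/2)) s
                + indicator (visible_segment n u c rk i (c i + 1/2)) s :: real)
        = (\<Sum>i<n. if \<bar>s - u i\<bar> \<le> 1/2 then ?v i else 0)"
    by (intro sum.cong) (auto simp: visible_segment_def S_def indicator_def)
  also have "\<dots> = (\<Sum>i\<in>S. ?v i)"
    using sum.inter_filter[where A = "{..<n}" and g = ?v and P = "\<lambda>i. \<bar>s - u i\<bar> \<le> 1/2",
        folded S_def]
    by simp
  finally have lhs: "(\<Sum>i<n. indicator (visible_segment n u c rk i (c i - 1/2)) s
                + indicator (visible_segment n u c rk i (c i + 1/2)) s :: real) = (\<Sum>i\<in>S. ?v i)" .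
  have "(\<Sum>i<n. indicator {u i - 1/2..u i + 1/2} s :: real) = (\<Sum>i<n. of_bool (\<bar>s - u i\<bar> \<le> 1/2))"
    by (intro sum.cong) (auto simp: indicator_def abs_if)
  then have rhs: "(\<Sum>i<n. indicator {u i - 1/2..u i + 1/2} s :: real) = card S"
    by (simp add: S_def Int_def)
  show ?thesis
  proof (cases "S = {}")
    case False
    then have "s \<in> {0..L}"
      using u by (auto simp: S_def abs_if split: if_split_asm)
    moreover have "(\<Sum>i\<in>S. ?v i) \<le> card S + 1"
      using sum_endpoint_visible_le[OF \<open>finite S\<close>] c by (auto simp: S_def)
    ultimately show ?thesis by (simp add: lhs rhs)
  qed (simp add: lhs rhs)
qed

lemma sum_measure_visible_segments_le:
  fixes u c :: "nat \<Rightarrow> real"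
  assumes u: "\<forall>i<n. 1/2 \<le> u i \<and> u i \<le> L - 1/2" and c: "\<forall>i<n. \<forall>j<n. \<bar>c i - c j\<bar> \<le> 1"
    and "0 \<le> L"
  shows "(\<Sum>i<n. measure lebesgue (visible_segment n u c rk i (c i - 1/2))
                + measure lebesgue (visible_segment n u c rk i (c i + 1/2))) \<le> n + L"
proof -
  have int: "integrable lebesgue (indicator (visible_segment n u c rk i e) :: real \<Rightarrow> real)" for i e
    using visible_segment_lmeasurable[of n u c rk i e]
    by (intro integrable_real_indicator) (auto simp: fmeasurable_def)
  have "(\<Sum>i<n. measure lebesgue (visible_segment n u c rk i (c i - 1/2))
                + measure lebesgue (visible_segment n u c rk i (c i + 1/2)))
      = (LINT s|lebesgue. (\<Sum>i<n. indicator (visible_segment n u c rk i (c i - 1/2)) s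
                + indicator (visible_segment n u c rk i (c i + 1/2)) s))"
    by (simp add: int)
  also have "\<dots> \<le> (LINT s|lebesgue. (\<Sum>i<n. indicator {u i - 1/2..u i + 1/2} s) + indicator {0..L} s)"
    using sum_indicator_visible_segments_le[OF u c] \<open>0 \<le> L\<close>
    by (intro integral_mono)
      (auto simp: int intro!: Bochner_Integration.integrable_add Bochner_Integration.integrable_sum)
  also have "\<dots> = n + L"
    using \<open>0 \<le> L\<close> by simp
  finally show ?thesis .
qed

lemma visible_perimeter_front:
  "\<forall>j<n. j \<noteq> i \<longrightarrow> rk j < rk i \<Longrightarrow> visible_perimeter n x y rk i = 4"
  by (simp add: visible_perimeter_eq visible_segment_front)

lemma pairwise_close_if_centres_within:
  fixes u :: "nat \<Rightarrow> real"
  assumes "\<forall>i<n. 1/2 \<le> u i \<and> u i \<le> L - 1/2" "L \<le> 2"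
  shows "\<forall>i<n. \<forall>j<n. \<bar>u i - u j\<bar> \<le> 1"
proof (intro allI impI)
  fix i j assume "i < n" "j < n"
  then show "\<bar>u i - u j\<bar> \<le> 1"
    using assms(1)[rule_format, of i] assms(1)[rule_format, of j] assms(2)
    unfolding abs_le_iff by linarith
qed

lemma sum_visible_perimeter_le:
  assumes x: "\<forall>i<n. 1/2 \<le> x i \<and> x i \<le> w - 1/2" and y: "\<forall>i<n. 1/2 \<le> y i \<and> y i \<le> h - 1/2"
    and "0 \<le> w" "w \<le> 2" "0 \<le> h" "h \<le> 2"
  shows "(\<Sum>i<n. visible_perimeter n x y rk i) \<le> 2 * n + w + h"
proof -
  have cx: "\<forall>i<n. \<forall>j<n. \<bar>x i - x j\<bar> \<le> 1"
    using pairwise_close_if_centres_within[OF x \<open>w \<le> 2\<close>] .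
  have cy: "\<forall>i<n. \<forall>j<n. \<bar>y i - y j\<bar> \<le> 1"
    using pairwise_close_if_centres_within[OF y \<open>h \<le> 2\<close>] .
  show ?thesis
    using sum_measure_visible_segments_le[OF x cy \<open>0 \<le> w\<close>, of rk]
      sum_measure_visible_segments_le[OF y cx \<open>0 \<le> h\<close>, of rk]
    unfolding visible_perimeter_eq sum.distrib by linarith
qed

lemma card_mult_Min_le_sum:
  fixes f :: "'a \<Rightarrow> real"
  assumes "finite A" "A \<noteq> {}"
  shows "card A * Min (f ` A) \<le> sum f A"
  using sum_bounded_below[of A "Min (f ` A)" f] assms by simp

lemma Min_le_mean_without:
  fixes g :: "'a \<Rightarrow> real"
  assumes "finite A" "f \<in> A" "2 \<le> card A"
  shows "Min (g ` A) \<le> (sum g A - g f) / (real (card A) - 1)"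
proof -
  have B: "finite (A - {f})" "card (A - {f}) = card A - 1"
    using assms(1,2) by auto
  then have "card (A - {f}) \<noteq> 0"
    using assms(3) by linarith
  then have "A - {f} \<noteq> {}"
    by (metis card.empty)
  have "Min (g ` A) \<le> Min (g ` (A - {f}))"
    using \<open>A - {f} \<noteq> {}\<close> assms(1) by (intro Min_antimono) auto
  also have "\<dots> \<le> sum g (A - {f}) / (real (card A) - 1)"
    using card_mult_Min_le_sum[OF B(1) \<open>A - {f} \<noteq> {}\<close>, of g] B(2) assms(3)
    by (simp add: pos_le_divide_eq of_nat_diff mult.commute)
  also have "sum g (A - {f}) = sum g A - g f"
    using assms(1,2) by (simp add: sum_diff1)
  finally show ?thesis .
qed

lemma lift_Suc_mono_le_lessThan:
  fixes y :: "nat \<Rightarrow> 'a::preorder"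
  assumes "\<And>i. Suc i < n \<Longrightarrow> y i \<le> y (Suc i)" "i \<le> j" "j < n"
  shows "y i \<le> y j"
  using assms(2,3)
proof (induction rule: dec_induct)
  case (step k)
  then show ?case using assms(1)[of k] order_trans by auto
qed simp

lemma lift_Suc_mono_between_ends:
  fixes y :: "nat \<Rightarrow> 'a::preorder"
  assumes "\<And>i. Suc i < n \<Longrightarrow> y i \<le> y (Suc i)" "i < n"
  shows "y 0 \<le> y i" "y i \<le> y (n - 1)"
  using lift_Suc_mono_le_lessThan[of n y, OF assms(1)] assms(2) by auto

lemma ex_greatest_if_inj_on:
  fixes rk :: "'a \<Rightarrow> 'b::linorder"
  assumes "finite A" "A \<noteq> {}" "inj_on rk A"
  obtains f where "f \<in> A" "\<forall>j\<in>A. j \<noteq> f \<longrightarrow> rk j < rk f"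
proof -
  have "Max (rk ` A) \<in> rk ` A"
    using assms(1,2) by (intro Max_in) auto
  then obtain f where f: "f \<in> A" "rk f = Max (rk ` A)"
    by auto
  have "rk j < rk f" if "j \<in> A" "j \<noteq> f" for j
    using that f assms(1,3) by (metis Max_ge finite_imageI image_eqI inj_on_contraD order_le_neq_trans)
  with f(1) show thesis using that by blast
qed

theorem lemma4:
  fixes w h :: real and n :: nat and x y :: "nat \<Rightarrow> real" and rk :: "nat \<Rightarrow> nat"
  assumes "1 < w" "w \<le> 2" "1 < h" "h \<le> 2" "n \<ge> 2"
    and "1/2 \<le> y 0" "\<And>i. Suc i < n \<Longrightarrow> y i < y (Suc i)" "y (n - 1) \<le> h - 1/2"
    and "is_layout w n x rk"
  shows "layout_gap n x y rk \<le> (w + h - 2) / (real n - 1)"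
proof -
  have x: "\<forall>i<n. 1/2 \<le> x i \<and> x i \<le> w - 1/2" and inj: "inj_on rk {..<n}"
    using assms(9) unfolding is_layout_def by auto
  have y: "\<forall>i<n. 1/2 \<le> y i \<and> y i \<le> h - 1/2"
  proof (intro allI impI)
    fix i assume "i < n"
    from lift_Suc_mono_between_ends[of n y, OF less_imp_le[OF assms(7)] this] assms(6,8)
    show "1/2 \<le> y i \<and> y i \<le> h - 1/2" by linarith
  qed
  have "{..<n} \<noteq> {}"
    using assms(5) by (auto simp: lessThan_empty_iff)
  then obtain f where f: "f \<in> {..<n}" "\<forall>j\<in>{..<n}. j \<noteq> f \<longrightarrow> rk j < rk f"
    using ex_greatest_if_inj_on[OF finite_lessThan _ inj] by blast
  have "layout_gap n x y rk \<le> ((\<Sum>i<n. sq_gap n x y rk i) - sq_gap n x y rk f) / (real n - 1)"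
    using Min_le_mean_without[OF finite_lessThan f(1), of "sq_gap n x y rk"] assms(5)
    by (simp add: layout_gap_def)
  also have "sq_gap n x y rk f = 2"
    using f(2) by (simp add: sq_gap_def visible_perimeter_front)
  also have "(\<Sum>i<n. sq_gap n x y rk i) \<le> w + h"
    using sum_visible_perimeter_le[OF x y, of rk] assms(1-4) by (simp add: sq_gap_def sum_subtractf)
  finally show ?thesis
    using assms(5) by (simp add: divide_right_mono)
qed

end
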